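(* Let $k$ be a field of characteristic $\neq 2$, $\mathcal A=k[t,t^{-1},(1-t)^{-1}]\subset k(t)$, $t'=1-t^{-1}$, $t''=(1-t)^{-1}$, $\mathfrak g=\mathfrak{sl}_2(k)\otimes_k\mathcal A$, and let $x=\begin{pmatrix}-1&2\\0&1\end{pmatrix}$, $y=\begin{pmatrix}-1&0\\-2&1\end{pmatrix}$, $z=\begin{pmatrix}1&0\\0&-1\end{pmatrix}$. Put $u_0=\tfrac14\bigl(z\otimes 1+x\otimes t''+y\otimes(t''-1)\bigr)$, $u_1=\tfrac14\bigl(x\otimes 1+y\otimes t+z\otimes(t-1)\bigr)$, $u_2=\tfrac14\bigl(y\otimes 1+z\otimes t'+x\otimes(t'-1)\bigr)$. Then: (i) $\{u_0,u_1,u_2\}$ is a basis of $\mathfrak g$ as an $\mathcal A$-module; (ii) $[u_0,u_1]=-u_2t$, $[u_1,u_2]=-u_0t'$, $[u_2,u_0]=-u_1t''$; (iii) $u_0,u_1,u_2$ generate $\mathfrak g$ as a Lie algebra over $k$.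
   Context: $\mathfrak g$ is a Lie algebra over $\mathcal A$ with bracket $[a\otimes f,b\otimes g]=[a,b]\otimes fg$; for $g\in\mathfrak g$ and $a\in\mathcal A$, $ga$ denotes the $\mathcal A$-module action. *)

theory Defs
  imports "HOL-Analysis.Analysis" "HOL-Computational_Algebra.Polynomial" "HOL-Computational_Algebra.Fraction_Field"
begin

type_synonym 'a rf = "'a poly fract"

definition rf_of_poly :: "'a::field poly \<Rightarrow> 'a rf" where
  "rf_of_poly p = Fract p 1"

definition tt :: "'a::field rf" where
  "tt = rf_of_poly [:0, 1:]"

definition tt' :: "'a::field rf" where
  "tt' = 1 - inverse tt"

definition tt'' :: "'a::field rf" where
  "tt'' = inverse (1 - tt)"

definition A_ring :: "'a::field rf set" where
  "A_ring = {f. \<exists>p (a::nat) (b::nat). f = rf_of_poly p / (tt ^ a * (1 - tt) ^ b)}"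

text \<open>g = sl_2(k) \<otimes>_k A, realised as the traceless 2x2 matrices with entries in A.\<close>
definition g_alg :: "('a::field rf ^ 2 ^ 2) set" where
  "g_alg = {M. (\<forall>i j. M $ i $ j \<in> A_ring) \<and> trace M = 0}"

definition lie_br :: "'a::field rf ^ 2 ^ 2 \<Rightarrow> 'a rf ^ 2 ^ 2 \<Rightarrow> 'a rf ^ 2 ^ 2" where
  "lie_br M N = M ** N - N ** M"

definition mact :: "'a::field rf ^ 2 ^ 2 \<Rightarrow> 'a rf \<Rightarrow> 'a rf ^ 2 ^ 2" where
  "mact M f = (\<chi> i j. M $ i $ j * f)"

definition tens :: "'a::field ^ 2 ^ 2 \<Rightarrow> 'a rf \<Rightarrow> 'a rf ^ 2 ^ 2" where
  "tens a f = (\<chi> i j. rf_of_poly [: a $ i $ j :] * f)"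

definition mk2 :: "'a::zero \<Rightarrow> 'a \<Rightarrow> 'a \<Rightarrow> 'a \<Rightarrow> 'a ^ 2 ^ 2" where
  "mk2 a b c d = vector [vector [a, b], vector [c, d]]"

definition xm :: "'a::field ^ 2 ^ 2" where "xm = mk2 (-1) 2 0 1"
definition ym :: "'a::field ^ 2 ^ 2" where "ym = mk2 (-1) 0 (-2) 1"
definition zm :: "'a::field ^ 2 ^ 2" where "zm = mk2 1 0 0 (-1)"

definition u0 :: "'a::field rf ^ 2 ^ 2" where
  "u0 = mact (tens zm 1 + tens xm tt'' + tens ym (tt'' - 1)) (1/4)"
definition u1 :: "'a::field rf ^ 2 ^ 2" where
  "u1 = mact (tens xm 1 + tens ym tt + tens zm (tt - 1)) (1/4)"
definition u2 :: "'a::field rf ^ 2 ^ 2" where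
  "u2 = mact (tens ym 1 + tens zm tt' + tens xm (tt' - 1)) (1/4)"

inductive_set lie_gen :: "('a::field rf ^ 2 ^ 2) set \<Rightarrow> ('a rf ^ 2 ^ 2) set"
  for S where
  base: "M \<in> S \<Longrightarrow> M \<in> lie_gen S"
| zero: "0 \<in> lie_gen S"
| add: "M \<in> lie_gen S \<Longrightarrow> N \<in> lie_gen S \<Longrightarrow> M + N \<in> lie_gen S"
| smul: "M \<in> lie_gen S \<Longrightarrow> mact M (rf_of_poly [: c :]) \<in> lie_gen S"
| br: "M \<in> lie_gen S \<Longrightarrow> N \<in> lie_gen S \<Longrightarrow> lie_br M N \<in> lie_gen S"

end

theory Submission
  imports Defs "HOL-Computational_Algebra.Polynomial_Factorial"
begin

(* In coordinates u0 = t''/2 [[-t, 1], [-t, t]], u1 = 1/2 [[-1, 1], [-t, 1]] and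
   u2 = -1/(2t) [[0, 1], [t, 0]], so (i) and (ii) are identities in k(t): a traceless matrix
   [[a, b], [c, -a]] has the coordinates 2a + b - c/t, t''(c - 2ta - tb) - 2a and -c - tb, which
   lie in A whenever a, b, c do.
   For (iii), let L be the Lie algebra generated by the u_i. Explicit brackets of the u_i give
   E and F, hence H = [E, F], in L. The coefficients f with E f, F f, H f all in L form a
   k-subalgebra, since [E f, F g] = H fg, [H f, E g] = 2 E fg and [H f, F g] = -2 F fg (here
   char k <> 2 is used). It contains t, 1/t and t t'', because E t = [E, [E, u1]],
   E/t = [[F, u2], E] and E t t'' = [E, [E, u0]]; as t, 1/t and t'' generate A as a k-algebra,
   L contains sl_2 (x) A. *)

lemma rf_of_poly_eq_to_fract: "rf_of_poly = to_fract"
  by (simp add: fun_eq_iff rf_of_poly_def to_fract_def)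

definition rf_const :: "'a::field \<Rightarrow> 'a rf" where
  "rf_const c = to_fract [:c:]"

lemma rf_const_0 [simp]: "rf_const 0 = 0"
  by (simp add: rf_const_def)

lemma rf_const_1 [simp]: "rf_const 1 = 1"
  by (simp add: rf_const_def one_pCons[symmetric])

lemma rf_const_mult: "rf_const (a * b) = rf_const a * rf_const b"
  by (simp add: rf_const_def flip: to_fract_mult)

lemma rf_const_uminus [simp]: "rf_const (- a) = - rf_const a"
  by (simp add: rf_const_def flip: to_fract_uminus)

lemma rf_const_eq_0_iff [simp]: "rf_const a = 0 \<longleftrightarrow> a = 0"
  by (simp add: rf_const_def)

lemma rf_const_inverse: "rf_const (inverse c) = inverse (rf_const c)"
proof (cases "c = 0")
  case False
  then have "rf_const c * rf_const (inverse c) = 1"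
    by (simp flip: rf_const_mult)
  then show ?thesis
    by (rule inverse_unique[symmetric])
qed simp

lemma rf_const_divide: "rf_const (a / b) = rf_const a / rf_const b"
  by (simp add: divide_inverse rf_const_mult rf_const_inverse)

lemma to_fract_of_nat: "to_fract (of_nat n) = of_nat n"
  by (induction n) simp_all

lemma to_fract_power: "to_fract (p ^ n) = to_fract p ^ n"
  by (induction n) simp_all

lemma rf_const_numeral [simp]: "rf_const (numeral n) = numeral n"
  by (metis rf_const_def numeral_poly of_nat_numeral to_fract_of_nat)

lemma rf_numeral_Bit0_eq_0_iff:
  assumes "(2::'a::field) \<noteq> 0"
  shows "(numeral (Num.Bit0 n) :: 'a rf) = 0 \<longleftrightarrow> (numeral n :: 'a rf) = 0"
proof -
  have "(2::'a rf) \<noteq> 0"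
    using assms by (metis rf_const_eq_0_iff rf_const_numeral)
  then show ?thesis
    by (metis mult_2 mult_eq_0_iff numeral_Bit0)
qed

lemma tt_eq_to_fract: "tt = to_fract [:0, 1:]"
  by (simp add: tt_def rf_of_poly_eq_to_fract)

lemma one_minus_tt_eq_to_fract: "1 - (tt::'a::field rf) = to_fract [:1, -1:]"
  by (simp add: tt_eq_to_fract one_pCons flip: to_fract_1 to_fract_diff)

lemma tt_nonzero [simp]: "(tt::'a::field rf) \<noteq> 0"
  by (simp add: tt_eq_to_fract)

lemma one_minus_tt_nonzero [simp]: "1 - (tt::'a::field rf) \<noteq> 0"
  by (simp add: one_minus_tt_eq_to_fract)

lemma tt_ne_1 [simp]: "(tt::'a::field rf) \<noteq> 1"
  using one_minus_tt_nonzero by fastforce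

(* Naming 1 - t keeps the denominators produced by field_simps monomial: otherwise it has to
   show that the expanded polynomial (1 - t)^2 is nonzero, which it cannot. *)
lemma tt_tt''_param:
  obtains R :: "'a::field rf" where "R \<noteq> 0" "tt = 1 - R" "tt'' = inverse R"
proof
  show "1 - tt \<noteq> (0::'a rf)" "tt = 1 - (1 - tt)" "tt'' = inverse (1 - tt)"
    by (simp_all add: tt''_def)
qed

section \<open>The ring A\<close>

lemma A_ringE:
  assumes "f \<in> A_ring"
  obtains p a b where "f = to_fract p / (tt ^ a * (1 - tt) ^ b)"
  using assms by (auto simp: A_ring_def rf_of_poly_eq_to_fract)

lemma A_ringI: "to_fract p / (tt ^ a * (1 - tt) ^ b) \<in> A_ring"
  by (auto simp: A_ring_def rf_of_poly_eq_to_fract)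

lemma to_fract_in_A_ring: "to_fract p \<in> A_ring"
  using A_ringI[of p 0 0] by simp

lemma A_ring_add:
  assumes "f \<in> A_ring" "g \<in> A_ring"
  shows "f + g \<in> A_ring"
proof -
  obtain p a b q c d where
    f: "f = to_fract p / (tt ^ a * (1 - tt) ^ b)" and g: "g = to_fract q / (tt ^ c * (1 - tt) ^ d)"
    using assms by (metis A_ringE)
  have "f + g = to_fract (p * [:0, 1:] ^ c * [:1, -1:] ^ d + q * [:0, 1:] ^ a * [:1, -1:] ^ b)
      / (tt ^ (a + c) * (1 - tt) ^ (b + d))"
    by (simp add: f g to_fract_power power_add field_simps
        flip: tt_eq_to_fract one_minus_tt_eq_to_fract)
  then show ?thesis
    by (simp only: A_ringI)
qed

lemma A_ring_mult:
  assumes "f \<in> A_ring" "g \<in> A_ring"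
  shows "f * g \<in> A_ring"
proof -
  obtain p a b q c d where
    f: "f = to_fract p / (tt ^ a * (1 - tt) ^ b)" and g: "g = to_fract q / (tt ^ c * (1 - tt) ^ d)"
    using assms by (metis A_ringE)
  have "f * g = to_fract (p * q) / (tt ^ (a + c) * (1 - tt) ^ (b + d))"
    by (simp add: f g power_add field_simps)
  then show ?thesis
    by (simp only: A_ringI)
qed

lemma A_ring_uminus:
  assumes "f \<in> A_ring"
  shows "- f \<in> A_ring"
proof -
  obtain p a b where "f = to_fract p / (tt ^ a * (1 - tt) ^ b)"
    using assms by (metis A_ringE)
  then have "- f = to_fract (- p) / (tt ^ a * (1 - tt) ^ b)"
    by simp
  then show ?thesis
    by (simp only: A_ringI)
qed

lemma A_ring_diff: "f \<in> A_ring \<Longrightarrow> g \<in> A_ring \<Longrightarrow> f - g \<in> A_ring"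
  by (metis A_ring_add A_ring_uminus diff_conv_add_uminus)

lemma rf_const_in_A_ring: "rf_const c \<in> A_ring"
  by (simp add: rf_const_def to_fract_in_A_ring)

lemma zero_in_A_ring: "0 \<in> A_ring"
  and one_in_A_ring: "1 \<in> A_ring"
  using to_fract_in_A_ring[of 0] to_fract_in_A_ring[of 1] by simp_all

lemma numeral_in_A_ring: "numeral n \<in> A_ring"
  by (metis rf_const_in_A_ring rf_const_numeral)

lemma A_ring_divide_numeral: "f \<in> A_ring \<Longrightarrow> f / numeral n \<in> A_ring"
  using A_ring_mult[OF _ rf_const_in_A_ring[of "1 / numeral n"]]
  by (simp add: rf_const_divide)

lemma tt_in_A_ring: "tt \<in> A_ring"
  by (simp add: tt_eq_to_fract to_fract_in_A_ring)

lemma inverse_tt_in_A_ring: "inverse tt \<in> A_ring"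
  using A_ringI[of 1 1 0] by (simp add: inverse_eq_divide)

lemma tt''_in_A_ring: "tt'' \<in> A_ring"
  using A_ringI[of 1 0 1] by (simp add: tt''_def inverse_eq_divide)

lemma tt'_in_A_ring: "tt' \<in> A_ring"
  using A_ring_diff[OF one_in_A_ring inverse_tt_in_A_ring] by (simp add: tt'_def)

lemmas A_ring_closed = A_ring_add A_ring_mult A_ring_uminus A_ring_diff A_ring_divide_numeral
  zero_in_A_ring one_in_A_ring numeral_in_A_ring rf_const_in_A_ring
  tt_in_A_ring inverse_tt_in_A_ring tt''_in_A_ring tt'_in_A_ring

lemma A_ring_subset_subalgebra:
  fixes R :: "'a::field rf set"
  assumes const: "\<And>c. rf_const c \<in> R" and "tt \<in> R" "inverse tt \<in> R" "tt'' \<in> R"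
    and add: "\<And>f g. f \<in> R \<Longrightarrow> g \<in> R \<Longrightarrow> f + g \<in> R"
    and mult: "\<And>f g. f \<in> R \<Longrightarrow> g \<in> R \<Longrightarrow> f * g \<in> R"
  shows "A_ring \<subseteq> R"
proof
  have poly: "to_fract p \<in> R" for p
  proof (induction p)
    case (pCons c p)
    have "to_fract (pCons c p) = rf_const c + tt * to_fract p"
      by (simp add: rf_const_def tt_eq_to_fract flip: to_fract_mult to_fract_add)
    then show ?case
      using pCons.IH \<open>tt \<in> R\<close> by (simp add: add const mult)
  qed (use const[of 0] in simp)
  have power: "f ^ n \<in> R" if "f \<in> R" for f n
    using that const[of 1] by (induction n) (simp_all add: mult)
  fix f :: "'a rf"
  assume "f \<in> A_ring"
  then obtain p a b where "f = to_fract p / (tt ^ a * (1 - tt) ^ b)"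
    by (rule A_ringE)
  then have "f = to_fract p * (inverse tt ^ a * tt'' ^ b)"
    by (simp add: tt''_def divide_inverse power_inverse inverse_mult_distrib mult_ac)
  then show "f \<in> R"
    using assms by (simp add: poly power mult)
qed

section \<open>Matrices in sl_2 (x) A\<close>

lemma mk2_nth [simp]:
  "mk2 a b c d $ 1 $ 1 = a" "mk2 a b c d $ 1 $ 2 = b"
  "mk2 a b c d $ 2 $ 1 = c" "mk2 a b c d $ 2 $ 2 = d"
  by (simp_all add: mk2_def)

lemma mk2_entries: "M = mk2 (M $ 1 $ 1) (M $ 1 $ 2) (M $ 2 $ 1) (M $ 2 $ 2)"
  by (simp add: vec_eq_iff forall_2)

lemma mk2_eq_iff: "mk2 a b c d = mk2 a' b' c' d' \<longleftrightarrow> a = a' \<and> b = b' \<and> c = c' \<and> d = d'"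
  by (auto simp: vec_eq_iff forall_2)

lemma mk2_zero: "0 = mk2 0 0 0 0"
  by (simp add: vec_eq_iff forall_2)

lemma mk2_add: "mk2 a b c d + mk2 a' b' c' d' = mk2 (a + a') (b + b') (c + c') (d + d')"
  by (simp add: vec_eq_iff forall_2)

lemma mk2_diff: "mk2 a b c d - mk2 a' b' c' d' = mk2 (a - a') (b - b') (c - c') (d - d')"
  by (simp add: vec_eq_iff forall_2)

lemma mk2_uminus: "- mk2 a b c d = mk2 (- a) (- b) (- c) (- d)"
  by (simp add: vec_eq_iff forall_2)

lemma mact_mk2: "mact (mk2 a b c d) f = mk2 (a * f) (b * f) (c * f) (d * f)"
  by (simp add: vec_eq_iff forall_2 mact_def)

lemma tens_mk2:
  "tens (mk2 a b c d) f = mk2 (rf_const a * f) (rf_const b * f) (rf_const c * f) (rf_const d * f)"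
  by (simp add: vec_eq_iff forall_2 tens_def rf_const_def rf_of_poly_eq_to_fract)

lemma lie_br_mk2:
  "lie_br (mk2 a b c d) (mk2 a' b' c' d') =
    mk2 (b * c' - b' * c) (a * b' + b * d' - a' * b - b' * d)
        (c * a' + d * c' - c' * a - d' * c) (c * b' - c' * b)"
  by (simp add: vec_eq_iff forall_2 lie_br_def matrix_matrix_mult_def sum_2 algebra_simps)

lemma trace_mk2: "trace (mk2 a b c d) = a + d"
  by (simp add: trace_def sum_2)

lemmas mk2_arith = mk2_add mk2_diff mk2_uminus mact_mk2 tens_mk2 lie_br_mk2 mk2_eq_iff

lemma mk2_in_g_alg_iff:
  "mk2 a b c d \<in> g_alg \<longleftrightarrow> a \<in> A_ring \<and> b \<in> A_ring \<and> c \<in> A_ring \<and> d \<in> A_ring \<and> a + d = 0"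
  by (auto simp: g_alg_def trace_mk2 forall_2)

lemma g_algE:
  assumes "M \<in> g_alg"
  obtains a b c where "M = mk2 a b c (- a)" "a \<in> A_ring" "b \<in> A_ring" "c \<in> A_ring"
  using assms mk2_entries[of M] mk2_in_g_alg_iff by (metis add_eq_0_iff)

lemma mact_mact: "mact (mact M f) g = mact M (f * g)"
  by (simp add: vec_eq_iff mact_def mult.assoc)

lemma mact_add_right: "mact M (f + g) = mact M f + mact M g"
  by (simp add: vec_eq_iff mact_def distrib_left)

lemma mact_1 [simp]: "mact M 1 = M"
  by (simp add: vec_eq_iff mact_def)

lemma lie_br_mact: "lie_br (mact M f) (mact N g) = mact (lie_br M N) (f * g)"
  by (simp add: vec_eq_iff mact_def lie_br_def matrix_matrix_mult_def sum_2 algebra_simps)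

lemma lie_gen_rf_const: "M \<in> lie_gen S \<Longrightarrow> mact M (rf_const c) \<in> lie_gen S"
  unfolding rf_const_def rf_of_poly_eq_to_fract[symmetric] by (rule lie_gen.smul)

lemma lie_gen_uminus:
  assumes "M \<in> lie_gen S"
  shows "- M \<in> lie_gen S"
proof -
  have "- M = mact M (rf_const (- 1))"
    by (simp add: vec_eq_iff mact_def)
  with lie_gen_rf_const[OF assms] show ?thesis
    by metis
qed

lemma lie_gen_diff: "M \<in> lie_gen S \<Longrightarrow> N \<in> lie_gen S \<Longrightarrow> M - N \<in> lie_gen S"
  by (metis lie_gen.add lie_gen_uminus diff_conv_add_uminus)

lemma lie_gen_subset_g_alg:
  assumes "S \<subseteq> g_alg"
  shows "lie_gen S \<subseteq> g_alg"
proof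
  fix M assume "M \<in> lie_gen S"
  then show "M \<in> g_alg"
  proof (induction rule: lie_gen.induct)
    case (base M)
    then show ?case using assms by blast
  next
    case zero
    show ?case by (simp add: mk2_zero mk2_in_g_alg_iff zero_in_A_ring)
  next
    case (add M N)
    then show ?case
      by (auto elim!: g_algE simp: mk2_add mk2_in_g_alg_iff intro!: A_ring_closed)
  next
    case (smul M c)
    then show ?case
      by (auto elim!: g_algE simp: mact_mk2 mk2_in_g_alg_iff rf_of_poly_eq_to_fract
          intro!: A_ring_closed to_fract_in_A_ring)
  next
    case (br M N)
    then show ?case
      by (auto elim!: g_algE simp: lie_br_mk2 mk2_in_g_alg_iff intro!: A_ring_closed)
  qed
qed

section \<open>Coefficients of an sl_2-triple in a Lie subalgebra\<close>

definition Em :: "'a::field rf ^ 2 ^ 2" where "Em = mk2 0 1 0 0"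
definition Fm :: "'a::field rf ^ 2 ^ 2" where "Fm = mk2 0 0 1 0"
definition Hm :: "'a::field rf ^ 2 ^ 2" where "Hm = mk2 1 0 0 (- 1)"

lemma lie_br_Em_Fm: "lie_br Em Fm = Hm"
  and lie_br_Hm_Em: "lie_br Hm Em = mact Em 2"
  and lie_br_Hm_Fm: "lie_br Hm Fm = mact Fm (- 2)"
  by (simp_all add: Em_def Fm_def Hm_def mk2_arith)

lemma lie_br_Em_Em: "lie_br Em (lie_br Em M) = mact Em (- 2 * M $ 2 $ 1)"
  by (subst mk2_entries[of M]) (simp add: Em_def mk2_arith)

definition sl2_coeffs :: "('a::field rf ^ 2 ^ 2) set \<Rightarrow> 'a rf set" where
  "sl2_coeffs S = {f. mact Em f \<in> lie_gen S \<and> mact Fm f \<in> lie_gen S \<and> mact Hm f \<in> lie_gen S}"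

lemma one_in_sl2_coeffs: "Em \<in> lie_gen S \<Longrightarrow> Fm \<in> lie_gen S \<Longrightarrow> 1 \<in> sl2_coeffs S"
  unfolding sl2_coeffs_def by (simp add: lie_gen.br flip: lie_br_Em_Fm)

lemma sl2_coeffs_add: "f \<in> sl2_coeffs S \<Longrightarrow> g \<in> sl2_coeffs S \<Longrightarrow> f + g \<in> sl2_coeffs S"
  unfolding sl2_coeffs_def by (auto simp: mact_add_right intro: lie_gen.add)

lemma sl2_coeffs_rf_const: "1 \<in> sl2_coeffs S \<Longrightarrow> rf_const c \<in> sl2_coeffs S"
  using lie_gen_rf_const unfolding sl2_coeffs_def by fastforce

lemma sl2_coeffs_mult:
  assumes "(2::'a::field) \<noteq> 0" and "f \<in> sl2_coeffs S" "g \<in> sl2_coeffs S"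
  shows "f * (g::'a rf) \<in> sl2_coeffs S"
proof -
  have two: "(2::'a rf) \<noteq> 0"
    using rf_numeral_Bit0_eq_0_iff[OF assms(1), of Num.One] by simp
  have "mact Hm (f * g) = lie_br (mact Em f) (mact Fm g)"
    by (simp add: lie_br_mact lie_br_Em_Fm)
  moreover have "mact Em (f * g) = mact (lie_br (mact Hm f) (mact Em g)) (rf_const (1 / 2))"
    using two by (simp add: lie_br_mact lie_br_Hm_Em mact_mact rf_const_divide)
  moreover have "mact Fm (f * g) = mact (lie_br (mact Hm f) (mact Fm g)) (rf_const (- 1 / 2))"
    using two by (simp add: lie_br_mact lie_br_Hm_Fm mact_mact rf_const_divide)
  ultimately show ?thesis
    using assms(2,3) unfolding sl2_coeffs_def
    by (auto simp del: rf_const_uminus intro: lie_gen.br lie_gen_rf_const)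
qed

lemma sl2_coeffs_of_Em:
  assumes "(2::'a::field) \<noteq> 0" and "1 \<in> sl2_coeffs S" "mact Em f \<in> lie_gen S"
  shows "(f::'a rf) \<in> sl2_coeffs S"
proof -
  have two: "(2::'a rf) \<noteq> 0"
    using rf_numeral_Bit0_eq_0_iff[OF assms(1), of Num.One] by simp
  have F: "Fm \<in> lie_gen S"
    using assms(2) by (simp add: sl2_coeffs_def)
  have H: "mact Hm f = lie_br (mact Em f) Fm"
    by (metis lie_br_mact lie_br_Em_Fm mact_1 mult_1_right)
  have "mact Fm f = mact (lie_br (mact Hm f) Fm) (rf_const (- 1 / 2))"
    using two
    by (simp add: lie_br_mact[of _ _ _ 1, simplified] lie_br_Hm_Fm mact_mact rf_const_divide)
  then show ?thesis
    using assms(3) F H unfolding sl2_coeffs_def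
    by (auto simp del: rf_const_uminus intro: lie_gen.br lie_gen_rf_const)
qed

lemma A_ring_subset_sl2_coeffs:
  assumes "(2::'a::field) \<noteq> 0" and "1 \<in> sl2_coeffs S"
    and "tt \<in> sl2_coeffs S" "inverse tt \<in> sl2_coeffs S" "(tt''::'a rf) \<in> sl2_coeffs S"
  shows "A_ring \<subseteq> sl2_coeffs S"
  using assms
  by (intro A_ring_subset_subalgebra)
    (auto intro: sl2_coeffs_add sl2_coeffs_mult sl2_coeffs_rf_const)

lemma g_alg_subset_lie_gen:
  assumes "A_ring \<subseteq> sl2_coeffs (S :: ('a::field rf ^ 2 ^ 2) set)"
  shows "g_alg \<subseteq> lie_gen S"
proof
  fix M :: "'a rf ^ 2 ^ 2"
  assume "M \<in> g_alg"
  then obtain a b c where M: "M = mk2 a b c (- a)" and "a \<in> A_ring" "b \<in> A_ring" "c \<in> A_ring"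
    by (rule g_algE)
  then have "mact Hm a \<in> lie_gen S" "mact Em b \<in> lie_gen S" "mact Fm c \<in> lie_gen S"
    using assms by (auto simp: sl2_coeffs_def)
  moreover have "M = mact Hm a + mact Em b + mact Fm c"
    by (simp add: M Hm_def Em_def Fm_def mk2_arith)
  ultimately show "M \<in> lie_gen S"
    by (simp add: lie_gen.add)
qed

section \<open>The elements u0, u1, u2\<close>

lemma u0_eq_mk2:
  assumes "(2::'a::field) \<noteq> 0"
  shows "(u0::'a rf ^ 2 ^ 2) = mk2 (- tt * tt'' / 2) (tt'' / 2) (- tt * tt'' / 2) (tt * tt'' / 2)"
  by (simp add: u0_def tt''_def xm_def ym_def zm_def mk2_arith)
    (simp add: rf_numeral_Bit0_eq_0_iff[OF assms] field_simps)

lemma u1_eq_mk2: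
  assumes "(2::'a::field) \<noteq> 0"
  shows "(u1::'a rf ^ 2 ^ 2) = mk2 (- 1 / 2) (1 / 2) (- tt / 2) (1 / 2)"
  by (simp add: u1_def xm_def ym_def zm_def mk2_arith rf_numeral_Bit0_eq_0_iff[OF assms])

lemma u2_eq_mk2:
  assumes "(2::'a::field) \<noteq> 0"
  shows "(u2::'a rf ^ 2 ^ 2) = mk2 0 (- inverse tt / 2) (- 1 / 2) 0"
  by (simp add: u2_def tt'_def xm_def ym_def zm_def mk2_arith rf_numeral_Bit0_eq_0_iff[OF assms])

lemmas u_eq_mk2 = u0_eq_mk2 u1_eq_mk2 u2_eq_mk2

lemma u_in_g_alg:
  assumes "(2::'a::field) \<noteq> 0"
  shows "(u0::'a rf ^ 2 ^ 2) \<in> g_alg" "(u1::'a rf ^ 2 ^ 2) \<in> g_alg" "(u2::'a rf ^ 2 ^ 2) \<in> g_alg"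
  unfolding u_eq_mk2[OF assms] mk2_in_g_alg_iff by (auto intro!: A_ring_closed)

lemma lie_br_u0_u1:
  assumes "(2::'a::field) \<noteq> 0"
  shows "lie_br (u0::'a rf ^ 2 ^ 2) u1 = - mact u2 tt"
proof -
  obtain R :: "'a rf" where R: "R \<noteq> 0" "tt = 1 - R" "tt'' = inverse R"
    by (rule tt_tt''_param)
  show ?thesis
    using R(1)
    by (simp add: u_eq_mk2[OF assms] R(3) mk2_arith)
      (simp add: rf_numeral_Bit0_eq_0_iff[OF assms] field_simps R(2))
qed

lemma lie_br_u1_u2:
  assumes "(2::'a::field) \<noteq> 0"
  shows "lie_br (u1::'a rf ^ 2 ^ 2) u2 = - mact u0 tt'"
  by (simp add: u_eq_mk2[OF assms] tt'_def tt''_def mk2_arith)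
    (simp add: rf_numeral_Bit0_eq_0_iff[OF assms] field_simps)

lemma lie_br_u2_u0:
  assumes "(2::'a::field) \<noteq> 0"
  shows "lie_br (u2::'a rf ^ 2 ^ 2) u0 = - mact u1 tt''"
proof -
  obtain R :: "'a rf" where R: "R \<noteq> 0" "tt = 1 - R" "tt'' = inverse R"
    by (rule tt_tt''_param)
  show ?thesis
    using R(1)
    by (simp add: u_eq_mk2[OF assms] R(3) mk2_arith)
      (simp add: rf_numeral_Bit0_eq_0_iff[OF assms] field_simps)
qed

lemma u_combination:
  assumes "(2::'a::field) \<noteq> 0"
  shows "mact (u0::'a rf ^ 2 ^ 2) (2 * a + b - c / tt)
      + mact u1 (tt'' * (c - 2 * tt * a - tt * b) - 2 * a) + mact u2 (- c - tt * b)
    = mk2 a b c (- a)"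
proof -
  obtain R :: "'a rf" where R: "R \<noteq> 0" "tt = 1 - R" "tt'' = inverse R"
    by (rule tt_tt''_param)
  show ?thesis
    using R(1)
    by (simp add: u_eq_mk2[OF assms] R(3) mk2_arith)
      (simp add: rf_numeral_Bit0_eq_0_iff[OF assms] field_simps, simp add: R(2) algebra_simps)
qed

lemma u_coordinates:
  assumes "(2::'a::field) \<noteq> 0"
    and S: "mact (u0::'a rf ^ 2 ^ 2) c0 + mact u1 c1 + mact u2 c2 = S"
  shows "c0 = 2 * S $ 1 $ 1 + S $ 1 $ 2 - S $ 2 $ 1 / tt"
    and "c1 = tt'' * (S $ 2 $ 1 - 2 * tt * S $ 1 $ 1 - tt * S $ 1 $ 2) - 2 * S $ 1 $ 1"
    and "c2 = - S $ 2 $ 1 - tt * S $ 1 $ 2"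
proof -
  obtain R :: "'a rf" where R: "R \<noteq> 0" "tt = 1 - R" "tt'' = inverse R"
    by (rule tt_tt''_param)
  show "c0 = 2 * S $ 1 $ 1 + S $ 1 $ 2 - S $ 2 $ 1 / tt"
    and "c1 = tt'' * (S $ 2 $ 1 - 2 * tt * S $ 1 $ 1 - tt * S $ 1 $ 2) - 2 * S $ 1 $ 1"
    and "c2 = - S $ 2 $ 1 - tt * S $ 1 $ 2"
    using R(1) unfolding S[symmetric]
    by (simp_all add: u_eq_mk2[OF assms(1)] R(3) mk2_arith)
      (simp_all add: rf_numeral_Bit0_eq_0_iff[OF assms(1)] field_simps,
        simp_all add: R(2) algebra_simps)
qed

lemma u_spans_g_alg:
  assumes "(2::'a::field) \<noteq> 0" and "M \<in> g_alg"
  shows "\<exists>c0\<in>A_ring. \<exists>c1\<in>A_ring. \<exists>c2\<in>A_ring.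
    M = mact (u0::'a rf ^ 2 ^ 2) c0 + mact u1 c1 + mact u2 c2"
proof -
  obtain a b c where M: "M = mk2 a b c (- a)" and "a \<in> A_ring" "b \<in> A_ring" "c \<in> A_ring"
    using assms(2) by (rule g_algE)
  then have "2 * a + b - c / tt \<in> A_ring" "tt'' * (c - 2 * tt * a - tt * b) - 2 * a \<in> A_ring"
      "- c - tt * b \<in> A_ring"
    by (auto simp: divide_inverse intro!: A_ring_closed)
  with u_combination[OF assms(1)] show ?thesis
    unfolding M by metis
qed

lemma u_linearly_independent:
  assumes "(2::'a::field) \<noteq> 0" and "mact (u0::'a rf ^ 2 ^ 2) c0 + mact u1 c1 + mact u2 c2 = 0"
  shows "c0 = 0 \<and> c1 = 0 \<and> c2 = 0"
  using u_coordinates[OF assms] by simp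

lemma Em_eq_u:
  assumes "(2::'a::field) \<noteq> 0"
  shows "(Em::'a rf ^ 2 ^ 2) = u0 + u1 + lie_br u0 u1 - lie_br u0 u2"
proof -
  obtain R :: "'a rf" where R: "R \<noteq> 0" "tt = 1 - R" "tt'' = inverse R"
    by (rule tt_tt''_param)
  show ?thesis
    using R(1)
    by (simp add: Em_def u_eq_mk2[OF assms] R(3) mk2_arith)
      (simp add: rf_numeral_Bit0_eq_0_iff[OF assms] field_simps, simp add: R(2) algebra_simps)
qed

lemma Fm_eq_u:
  assumes "(2::'a::field) \<noteq> 0"
  shows "(Fm::'a rf ^ 2 ^ 2) = lie_br u0 u2 - lie_br u1 u2 - (u0 + u2)"
proof -
  obtain R :: "'a rf" where R: "R \<noteq> 0" "tt = 1 - R" "tt'' = inverse R"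
    by (rule tt_tt''_param)
  show ?thesis
    using R(1)
    by (simp add: Fm_def u_eq_mk2[OF assms] R(3) mk2_arith)
      (simp add: rf_numeral_Bit0_eq_0_iff[OF assms] field_simps, simp add: R(2) algebra_simps)
qed

lemma mact_Em_tt:
  assumes "(2::'a::field) \<noteq> 0"
  shows "mact Em (tt::'a rf) = lie_br Em (lie_br Em u1)"
  using rf_numeral_Bit0_eq_0_iff[OF assms, of Num.One] by (simp add: lie_br_Em_Em u1_eq_mk2 assms)

lemma mact_Em_tt_tt'':
  assumes "(2::'a::field) \<noteq> 0"
  shows "mact Em (tt * tt'' :: 'a rf) = lie_br Em (lie_br Em u0)"
  using rf_numeral_Bit0_eq_0_iff[OF assms, of Num.One] by (simp add: lie_br_Em_Em u0_eq_mk2 assms)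

lemma mact_Em_inverse_tt:
  assumes "(2::'a::field) \<noteq> 0"
  shows "mact Em (inverse tt :: 'a rf) = lie_br (lie_br Fm u2) Em"
  using rf_numeral_Bit0_eq_0_iff[OF assms, of Num.One]
  by (simp add: Em_def Fm_def u2_eq_mk2 assms mk2_arith field_simps)

lemma A_ring_subset_sl2_coeffs_u:
  assumes "(2::'a::field) \<noteq> 0"
  shows "A_ring \<subseteq> sl2_coeffs {u0, u1, u2 :: 'a rf ^ 2 ^ 2}"
proof -
  let ?S = "{u0, u1, u2 :: 'a rf ^ 2 ^ 2}"
  have gens: "u0 \<in> lie_gen ?S" "u1 \<in> lie_gen ?S" "u2 \<in> lie_gen ?S"
    by (simp_all add: lie_gen.base)
  then have E: "Em \<in> lie_gen ?S" and F: "Fm \<in> lie_gen ?S"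
    unfolding Em_eq_u[OF assms] Fm_eq_u[OF assms]
    by (simp_all add: lie_gen.add lie_gen.br lie_gen_diff)
  then have one: "1 \<in> sl2_coeffs ?S"
    by (rule one_in_sl2_coeffs)
  have "mact Em tt \<in> lie_gen ?S" "mact Em (inverse tt) \<in> lie_gen ?S"
      "mact Em (tt * tt'') \<in> lie_gen ?S"
    unfolding mact_Em_tt[OF assms] mact_Em_inverse_tt[OF assms] mact_Em_tt_tt''[OF assms]
    using gens E F by (simp_all add: lie_gen.br)
  then have "tt \<in> sl2_coeffs ?S" "inverse tt \<in> sl2_coeffs ?S" "tt * tt'' \<in> sl2_coeffs ?S"
    using sl2_coeffs_of_Em[OF assms one] by simp_all
  moreover have "tt'' = inverse tt * (tt * tt'')"
    by simp
  ultimately show ?thesis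
    using A_ring_subset_sl2_coeffs[OF assms one] sl2_coeffs_mult[OF assms] by metis
qed

theorem theorem1p2:
  assumes char: "(2::'a::field) \<noteq> 0"
  shows
    \<comment> \<open>(i) basis of g as an A-module\<close>
    "((u0::'a rf ^ 2 ^ 2) \<in> g_alg \<and> (u1::'a rf ^ 2 ^ 2) \<in> g_alg \<and> (u2::'a rf ^ 2 ^ 2) \<in> g_alg
      \<and> (\<forall>M\<in>(g_alg :: ('a rf ^ 2 ^ 2) set). \<exists>c0\<in>A_ring. \<exists>c1\<in>A_ring. \<exists>c2\<in>A_ring.
            M = mact u0 c0 + mact u1 c1 + mact u2 c2)
      \<and> (\<forall>c0\<in>(A_ring :: 'a rf set). \<forall>c1\<in>A_ring. \<forall>c2\<in>A_ring.
            mact u0 c0 + mact u1 c1 + mact u2 c2 = 0 \<longrightarrow>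
            c0 = 0 \<and> c1 = 0 \<and> c2 = 0))
     \<and> \<comment> \<open>(ii) bracket relations\<close>
     (lie_br (u0::'a rf ^ 2 ^ 2) u1 = - mact u2 tt
      \<and> lie_br (u1::'a rf ^ 2 ^ 2) u2 = - mact u0 tt'
      \<and> lie_br (u2::'a rf ^ 2 ^ 2) u0 = - mact u1 tt'')
     \<and> \<comment> \<open>(iii) generate g as a Lie algebra over k\<close>
     lie_gen {u0, u1, u2 :: 'a rf ^ 2 ^ 2} = g_alg"
proof -
  have "lie_gen {u0, u1, u2} \<subseteq> (g_alg :: ('a rf ^ 2 ^ 2) set)"
    using u_in_g_alg[OF char] by (intro lie_gen_subset_g_alg) auto
  moreover have "g_alg \<subseteq> lie_gen {u0, u1, u2 :: 'a rf ^ 2 ^ 2}"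
    using A_ring_subset_sl2_coeffs_u[OF char] by (rule g_alg_subset_lie_gen)
  ultimately show ?thesis
    using u_in_g_alg[OF char] u_spans_g_alg[OF char] u_linearly_independent[OF char]
      lie_br_u0_u1[OF char] lie_br_u1_u2[OF char] lie_br_u2_u0[OF char]
    by blast
qed

end
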